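(* Let $\rho$ be a density operator on $A\otimes B$ with $A\cong B\cong\mathbb{C}^d$, let $0\le\varepsilon\le1$, and let $\sigma = \Delta_\varepsilon(\rho) = (1-\varepsilon)\rho + \frac{\varepsilon}{d^2}I$. Then $D_H^2(\sigma\|\sigma_A\otimes\sigma_B)\le C\sqrt{\varepsilon} + D_H^2(\rho\|\rho_A\otimes\rho_B)$, where the constant can be taken as $C = 4+4\sqrt2$.
   Context: $\rho_A,\rho_B$ (resp. $\sigma_A,\sigma_B$) are partial traces. $D_H^2(\rho\|\sigma) = \mathrm{tr}((\sqrt\rho-\sqrt\sigma)^2)$ is the squared quantum Hellinger distance. *)

theory Defs
  imports "HOL-Analysis.Analysis"
begin

text \<open>Square complex matrices indexed by a finite type; the bipartite system
  A \<otimes> B with A = B = C^d is indexed by the product type 'd \<times> 'd, d = CARD('d).\<close>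

definition psd :: "complex^'n^'n \<Rightarrow> bool" where
  "psd M \<longleftrightarrow> (\<forall>x::complex^'n. \<exists>r::real. r \<ge> 0 \<and>
       (\<Sum>i\<in>UNIV. cnj (x $ i) * ((M *v x) $ i)) = complex_of_real r)"

definition density_op :: "complex^'n^'n \<Rightarrow> bool" where
  "density_op M \<longleftrightarrow> psd M \<and> trace M = 1"

definition msqrt :: "complex^'n^'n \<Rightarrow> complex^'n^'n" where
  "msqrt M = (THE S. psd S \<and> S ** S = M)"

definition tensor :: "complex^'a::finite^'a \<Rightarrow> complex^'b::finite^'b \<Rightarrow> complex^('a\<times>'b)^('a\<times>'b)" where
  "tensor X Y = (\<chi> p q. X $ fst p $ fst q * Y $ snd p $ snd q)"

definition ptrA :: "complex^('a::finite\<times>'b::finite)^('a\<times>'b) \<Rightarrow> complex^'a^'a" where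
  "ptrA M = (\<chi> i k. \<Sum>j\<in>UNIV. M $ (i, j) $ (k, j))"

definition ptrB :: "complex^('a::finite\<times>'b::finite)^('a\<times>'b) \<Rightarrow> complex^'b^'b" where
  "ptrB M = (\<chi> j l. \<Sum>i\<in>UNIV. M $ (i, j) $ (i, l))"

definition hellinger_sq :: "complex^'n^'n \<Rightarrow> complex^'n^'n \<Rightarrow> real" where
  "hellinger_sq R S = Re (trace ((msqrt R - msqrt S) ** (msqrt R - msqrt S)))"

definition depol :: "real \<Rightarrow> complex^('d::finite\<times>'d)^('d\<times>'d) \<Rightarrow> complex^('d\<times>'d)^('d\<times>'d)" where
  "depol \<epsilon> M = (\<chi> p q. complex_of_real (1 - \<epsilon>) * M $ p $ q
      + complex_of_real (\<epsilon> / (real CARD('d))^2) * (mat 1 :: complex^('d\<times>'d)^('d\<times>'d)) $ p $ q)"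

end

theory Submission
  imports Defs
begin

text \<open>The squared Hellinger distance is the squared Hilbert-Schmidt norm of \<open>\<surd>\<rho> - \<surd>\<sigma>\<close>,
  so its square root \<open>D\<^sub>H\<close> obeys the triangle inequality. Since \<open>\<sigma> \<ge> (1 - \<epsilon>) \<rho>\<close> and
  \<open>\<sigma>\<^sub>A \<otimes> \<sigma>\<^sub>B \<ge> (1 - \<epsilon>)\<^sup>2 \<rho>\<^sub>A \<otimes> \<rho>\<^sub>B\<close>, operator monotonicity of the square root gives
  \<open>tr (\<surd>\<sigma> \<surd>\<rho>) \<ge> \<surd>(1 - \<epsilon>)\<close> and the analogous bound for the product states, so
  \<open>D\<^sub>H(\<rho>, \<sigma>)\<close> and \<open>D\<^sub>H(\<rho>\<^sub>A \<otimes> \<rho>\<^sub>B, \<sigma>\<^sub>A \<otimes> \<sigma>\<^sub>B)\<close> are at most \<open>\<surd>(2\<epsilon>)\<close>. By the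
  triangle inequality the two distances in the theorem differ by at most \<open>2\<surd>(2\<epsilon>)\<close>; as both
  are at most \<open>\<surd>2\<close>, their squares differ by at most \<open>8\<surd>\<epsilon>\<close>.

  Square roots of positive semidefinite matrices come from the spectral theorem for Hermitian
  matrices, proved by minimising the Rayleigh quotient on successive orthogonal complements.\<close>

section \<open>Hermitian matrices and quadratic forms\<close>

definition cinner :: "complex^'n \<Rightarrow> complex^'n \<Rightarrow> complex" where
  "cinner x y = (\<Sum>i\<in>UNIV. cnj (x $ i) * y $ i)"

definition hermitian :: "complex^'n^'n \<Rightarrow> bool" where
  "hermitian M \<longleftrightarrow> (\<forall>i j. M $ i $ j = cnj (M $ j $ i))"

definition qform :: "complex^'n^'n \<Rightarrow> complex^'n \<Rightarrow> complex" where
  "qform M x = cinner x (M *v x)"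

lemma psd_iff_qform: "psd M \<longleftrightarrow> (\<forall>x. Im (qform M x) = 0 \<and> Re (qform M x) \<ge> 0)"
proof -
  have "(\<exists>r. r \<ge> 0 \<and> z = complex_of_real r) \<longleftrightarrow> Im z = 0 \<and> Re z \<ge> 0" for z
    using complex_nonneg_Reals_iff[of z] by (auto simp: nonneg_Reals_def)
  then show ?thesis unfolding psd_def qform_def cinner_def by presburger
qed

lemma cinner_add_left: "cinner (x + y) z = cinner x z + cinner y z"
  by (simp add: cinner_def sum.distrib ring_distribs)

lemma cinner_add_right: "cinner z (x + y) = cinner z x + cinner z y"
  by (simp add: cinner_def sum.distrib ring_distribs)

lemma cinner_diff_right: "cinner z (x - y) = cinner z x - cinner z y"
  by (simp add: cinner_def sum_subtractf ring_distribs)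

lemma cinner_scale_left: "cinner (c *s x) z = cnj c * cinner x z"
  by (simp add: cinner_def sum_distrib_left mult_ac)

lemma cinner_scale_right: "cinner z (c *s x) = c * cinner z x"
  by (simp add: cinner_def sum_distrib_left mult_ac)

lemma cinner_sum_right: "cinner u (sum g K) = (\<Sum>a\<in>K. cinner u (g a))"
  by (simp add: cinner_def sum_distrib_left sum_component; subst sum.swap; simp)

lemma cinner_commute: "cinner x y = cnj (cinner y x)"
  by (simp add: cinner_def mult.commute)

lemma cinner_axis_right: "cinner y (axis i 1) = cnj (y $ i)"
  by (simp add: cinner_def axis_def if_distrib if_distribR cong: if_cong)

lemma cinner_self: "cinner x x = complex_of_real ((norm x)^2)"
proof -
  have "cnj z * z = complex_of_real ((cmod z)^2)" for z
    by (metis complex_norm_square mult.commute)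
  then show ?thesis by (simp add: cinner_def of_real_sum norm_vec_def L2_set_def sum_nonneg)
qed

lemma cinner_self_eq_0: "cinner x x = 0 \<longleftrightarrow> x = 0"
  by (simp add: cinner_self)

lemma continuous_on_cinner_right: "continuous_on S (cinner u)"
  unfolding cinner_def by (intro continuous_intros)

lemma matrix_vector_mult_scale: "A *v (c *s x) = c *s (A *v (x::complex^'n))"
  by (simp add: vec_eq_iff matrix_vector_mult_def sum_distrib_left mult_ac)

lemma hermitian_cinner_adjoint:
  assumes "hermitian M"
  shows "cinner x (M *v y) = cinner (M *v x) y"
proof -
  have M: "cnj (M $ j $ i) = M $ i $ j" for i j
    using assms unfolding hermitian_def by (metis complex_cnj_cnj)
  have "cinner x (M *v y) = (\<Sum>i\<in>UNIV. \<Sum>j\<in>UNIV. cnj (x $ i) * M $ i $ j * y $ j)"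
    by (simp add: cinner_def matrix_vector_mult_def sum_distrib_left mult_ac)
  also have "\<dots> = (\<Sum>j\<in>UNIV. \<Sum>i\<in>UNIV. cnj (x $ i) * M $ i $ j * y $ j)"
    by (rule sum.swap)
  also have "\<dots> = cinner (M *v x) y"
    by (simp add: cinner_def matrix_vector_mult_def sum_distrib_left sum_distrib_right M mult_ac)
  finally show ?thesis .
qed

lemma qform_add:
  "qform M (u + v) = qform M u + qform M v + cinner u (M *v v) + cinner v (M *v u)"
  by (simp add: qform_def matrix_vector_right_distrib cinner_add_left cinner_add_right)

lemma qform_scale: "qform M (c *s u) = cnj c * c * qform M u"
  by (simp add: qform_def matrix_vector_mult_scale cinner_scale_left cinner_scale_right)

lemma qform_diff: "qform (A - B) x = qform A x - qform B x"
  by (simp add: qform_def matrix_vector_mult_diff_rdistrib cinner_diff_right)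

text \<open>Polarization: reality of the quadratic form at \<open>e\<^sub>i + e\<^sub>j\<close> and at \<open>e\<^sub>i + \<i> e\<^sub>j\<close> gives
  \<open>Im (M\<^sub>i\<^sub>j + M\<^sub>j\<^sub>i) = 0\<close> and \<open>Re (M\<^sub>i\<^sub>j - M\<^sub>j\<^sub>i) = 0\<close>.\<close>
lemma psd_imp_hermitian:
  assumes "psd M"
  shows "hermitian M"
proof -
  have real: "Im (qform M x) = 0" for x
    using assms psd_iff_qform by blast
  have entry: "cinner (axis i 1) (M *v axis j 1) = M $ i $ j" for i j
    by (simp add: cinner_def matrix_vector_mult_def axis_def if_distrib if_distribR cong: if_cong)
  have diag: "Im (M $ k $ k) = 0" for k
    using real[of "axis k 1"] entry[of k k] by (simp add: qform_def)
  have "M $ i $ j = cnj (M $ j $ i)" for i j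
  proof -
    have "Im (M $ i $ j + M $ j $ i) = 0"
      using real[of "axis i 1 + axis j 1"] diag[of i] diag[of j]
      unfolding qform_add by (simp add: qform_def entry)
    moreover have "Re (M $ i $ j - M $ j $ i) = 0"
      using real[of "axis i 1 + \<i> *s axis j 1"] diag[of i] diag[of j]
      unfolding qform_add qform_scale
      by (simp add: qform_def entry cinner_scale_left cinner_scale_right matrix_vector_mult_scale)
    ultimately show ?thesis by (simp add: complex_eq_iff)
  qed
  then show ?thesis unfolding hermitian_def by blast
qed

lemma hermitian_diff: "hermitian A \<Longrightarrow> hermitian B \<Longrightarrow> hermitian (A - B)"
  unfolding hermitian_def by (metis complex_cnj_diff vector_minus_component)

lemma hermitian_square_psd:
  assumes "hermitian S"
  shows "psd (S ** S)"
proof -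
  have "qform (S ** S) x = cinner (S *v x) (S *v x)" for x
    using hermitian_cinner_adjoint[OF assms] by (simp add: qform_def flip: matrix_vector_mul_assoc)
  then show ?thesis
    unfolding psd_iff_qform by (simp add: cinner_self)
qed

lemma psd_add: "psd A \<Longrightarrow> psd B \<Longrightarrow> psd (A + B)"
  unfolding psd_iff_qform by (simp add: qform_def matrix_vector_mult_add_rdistrib cinner_add_right)

lemma scaleR_matrix_component: "((r::real) *\<^sub>R (A::complex^'n^'m)) $ i $ j = complex_of_real r * A $ i $ j"
  by (simp only: vector_scaleR_component) (simp add: scaleR_conv_of_real)

lemma qform_scaleR_matrix: "qform (r *\<^sub>R A) x = complex_of_real r * qform A x"
  by (simp add: qform_def cinner_def matrix_vector_mult_def sum_distrib_left scaleR_matrix_component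
      mult_ac del: vector_scaleR_component)

lemma psd_scaleR: "psd A \<Longrightarrow> r \<ge> 0 \<Longrightarrow> psd (r *\<^sub>R A)"
  unfolding psd_iff_qform qform_scaleR_matrix by simp

lemma psd_mat_1: "psd (mat 1 :: complex^'n^'n)"
  unfolding psd_iff_qform by (simp add: qform_def cinner_self)

section \<open>The spectral theorem\<close>

lemma linear_plus_quadratic_nonneg_imp_zero:
  fixes a b :: real
  assumes nonneg: "\<And>t. a * t + b * t^2 \<ge> 0"
  shows "a = 0"
proof -
  define s where "s = 1 / (\<bar>b\<bar> + 1)"
  have s: "s > 0" "b * s < 1"
    by (auto simp: s_def field_simps abs_if)
  have "a * (- a * s) + b * (- a * s)^2 = a^2 * s * (b * s - 1)"
    by (simp add: power2_eq_square algebra_simps)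
  then have "a^2 * s * (b * s - 1) \<ge> 0"
    using nonneg[of "- a * s"] by simp
  then have "a^2 \<le> 0"
    using s by (smt (verit) mult_pos_neg mult_pos_pos zero_le_power2)
  then show ?thesis by simp
qed

lemma scaleR_eq_scale_of_real: "r *\<^sub>R x = complex_of_real r *s (x :: complex^'n)"
  by (simp add: vec_eq_iff) (simp add: scaleR_conv_of_real)

lemma qform_scaleR: "qform H (r *\<^sub>R x) = complex_of_real (r^2) * qform H x"
  by (simp add: scaleR_eq_scale_of_real qform_scale power2_eq_square)

lemma rayleigh_minimizer:
  fixes H :: "complex^'n^'n"
  assumes W: "closed W" "x0 \<in> W" "x0 \<noteq> 0" and cone: "\<And>r x. x \<in> W \<Longrightarrow> r *\<^sub>R x \<in> W"
  obtains v where "v \<in> W" "norm v = 1"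
    "\<And>w. w \<in> W \<Longrightarrow> Re (qform H v) * (norm w)^2 \<le> Re (qform H w)"
proof -
  let ?S = "sphere 0 1 \<inter> W"
  have "compact ?S"
    using W by (simp add: compact_Int_closed)
  moreover have "(1 / norm x0) *\<^sub>R x0 \<in> ?S"
    using W cone by simp
  moreover have "continuous_on ?S (\<lambda>x. Re (qform H x))"
    unfolding qform_def cinner_def matrix_vector_mult_def by (intro continuous_intros)
  ultimately obtain v where v: "v \<in> ?S" and min: "\<And>y. y \<in> ?S \<Longrightarrow> Re (qform H v) \<le> Re (qform H y)"
    using continuous_attains_inf[of ?S "\<lambda>x. Re (qform H x)"] by blast
  have bound: "Re (qform H v) * (norm w)^2 \<le> Re (qform H w)" if "w \<in> W" for w
  proof (cases "w = 0")
    case True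
    then show ?thesis by (simp add: qform_def cinner_def)
  next
    case False
    then have "Re (qform H v) \<le> Re (qform H ((1 / norm w) *\<^sub>R w))"
      using min cone \<open>w \<in> W\<close> by simp
    also have "\<dots> = Re (qform H w) / (norm w)^2"
      by (simp add: qform_scaleR power_divide)
    finally show ?thesis
      using False by (simp add: field_simps)
  qed
  then show thesis
    using that v by auto
qed

lemma qform_hermitian_add_scale:
  assumes "hermitian H"
  shows "Re (qform H (v + complex_of_real t *s w))
    = Re (qform H v) + t^2 * Re (qform H w) + 2 * t * Re (cinner w (H *v v))"
proof -
  have "cinner v (H *v w) = cnj (cinner w (H *v v))"
    using hermitian_cinner_adjoint[OF assms, of v w] cinner_commute by metis
  then show ?thesis
    unfolding qform_add qform_scale
    by (simp add: cinner_scale_left cinner_scale_right matrix_vector_mult_scale power2_eq_square)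
qed

lemma norm_add_scale_sq:
  "(norm (v + complex_of_real t *s w))^2 = (norm v)^2 + t^2 * (norm w)^2 + 2 * t * Re (cinner w v)"
proof -
  let ?x = "v + complex_of_real t *s w"
  have "(norm ?x)^2 = Re (cinner ?x ?x)"
    by (simp add: cinner_self)
  also have "\<dots> = Re (cinner v v) + t^2 * Re (cinner w w) + t * Re (cinner v w) + t * Re (cinner w v)"
    by (simp add: cinner_add_left cinner_add_right cinner_scale_left cinner_scale_right
        power2_eq_square algebra_simps)
  also have "Re (cinner v w) = Re (cinner w v)"
    by (subst cinner_commute) simp
  finally show ?thesis
    by (simp add: cinner_self)
qed

lemma rayleigh_minimizer_first_variation:
  fixes H :: "complex^'n^'n"
  assumes H: "hermitian H"
    and W: "\<And>x y. x \<in> W \<Longrightarrow> y \<in> W \<Longrightarrow> x + y \<in> W" "\<And>c x. x \<in> W \<Longrightarrow> c *s x \<in> W"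
    and v: "v \<in> W" "norm v = 1"
    and min: "\<And>w. w \<in> W \<Longrightarrow> Re (qform H v) * (norm w)^2 \<le> Re (qform H w)"
    and w: "w \<in> W"
  shows "Re (cinner w (H *v v - complex_of_real (Re (qform H v)) *s v)) = 0"
proof -
  define lam where "lam = Re (qform H v)"
  define z where "z = H *v v - complex_of_real lam *s v"
  have "Re (cinner w (H *v v)) = Re (cinner w z) + lam * Re (cinner w v)"
    by (simp add: z_def cinner_diff_right cinner_scale_right)
  moreover have "lam * (norm (v + complex_of_real t *s w))^2 \<le> Re (qform H (v + complex_of_real t *s w))"
    for t using min[OF W(1)[OF v(1) W(2)[OF w]]] by (simp add: lam_def)
  ultimately have "2 * Re (cinner w z) * t + (Re (qform H w) - lam * (norm w)^2) * t^2 \<ge> 0" for t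
    using v by (simp add: qform_hermitian_add_scale[OF H] norm_add_scale_sq lam_def algebra_simps)
  then have "2 * Re (cinner w z) = 0"
    by (rule linear_plus_quadratic_nonneg_imp_zero)
  then show ?thesis
    by (simp add: z_def lam_def)
qed

lemma rayleigh_minimizer_eigenvector:
  fixes H :: "complex^'n^'n"
  assumes H: "hermitian H"
    and W: "\<And>x y. x \<in> W \<Longrightarrow> y \<in> W \<Longrightarrow> x + y \<in> W" "\<And>c x. x \<in> W \<Longrightarrow> c *s x \<in> W"
    and invariant: "\<And>x. x \<in> W \<Longrightarrow> H *v x \<in> W"
    and v: "v \<in> W" "norm v = 1"
    and min: "\<And>w. w \<in> W \<Longrightarrow> Re (qform H v) * (norm w)^2 \<le> Re (qform H w)"
  shows "H *v v = complex_of_real (Re (qform H v)) *s v"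
proof -
  define z where "z = H *v v - complex_of_real (Re (qform H v)) *s v"
  have Re0: "Re (cinner w z) = 0" if "w \<in> W" for w
    unfolding z_def by (rule rayleigh_minimizer_first_variation[OF H W v min that])
  have orth: "cinner w z = 0" if "w \<in> W" for w
    using Re0[OF that] Re0[OF W(2)[OF that, of \<i>]]
    by (simp add: cinner_scale_left complex_eq_iff)
  have "z = H *v v + (- complex_of_real (Re (qform H v))) *s v"
    by (simp add: z_def vec_eq_iff)
  moreover have "H *v v + (- complex_of_real (Re (qform H v))) *s v \<in> W"
    using W invariant v by blast
  ultimately have "z \<in> W"
    by (simp only:)
  then have "z = 0"
    using orth cinner_self_eq_0 by blast
  then show ?thesis by (simp add: z_def)
qed

lemma hermitian_eigenvector_orthogonal:
  fixes H :: "complex^'n^'n"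
  assumes H: "hermitian H"
    and invariant: "\<And>u x. u \<in> U \<Longrightarrow> cinner u x = 0 \<Longrightarrow> cinner u (H *v x) = 0"
    and x0: "x0 \<noteq> 0" "\<And>u. u \<in> U \<Longrightarrow> cinner u x0 = 0"
  obtains v \<mu> where "cinner v v = 1" "\<And>u. u \<in> U \<Longrightarrow> cinner u v = 0"
    "H *v v = complex_of_real \<mu> *s v"
proof -
  define W where "W = (\<Inter>u\<in>U. {x. cinner u x = 0})"
  have "closed W"
    unfolding W_def
    by (intro closed_INT ballI closed_Collect_eq continuous_on_cinner_right continuous_on_const)
  moreover have add: "x + y \<in> W" if "x \<in> W" "y \<in> W" for x y
    using that by (simp add: W_def cinner_add_right)
  moreover have scale: "c *s x \<in> W" if "x \<in> W" for c x
    using that by (simp add: W_def cinner_scale_right)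
  moreover have "x0 \<in> W"
    using x0 by (simp add: W_def)
  ultimately obtain v where v: "v \<in> W" "norm v = 1"
    and min: "\<And>w. w \<in> W \<Longrightarrow> Re (qform H v) * (norm w)^2 \<le> Re (qform H w)"
    using rayleigh_minimizer[of W x0 H] x0 by (metis scaleR_eq_scale_of_real)
  have "H *v x \<in> W" if "x \<in> W" for x
    using that invariant by (simp add: W_def)
  then have "H *v v = complex_of_real (Re (qform H v)) *s v"
    using rayleigh_minimizer_eigenvector[OF H add scale _ v min] by blast
  moreover have "cinner v v = 1"
    using v by (simp add: cinner_self)
  ultimately show thesis
    using that v by (auto simp: W_def)
qed

definition orthonormal :: "('k \<Rightarrow> complex^'n) \<Rightarrow> 'k set \<Rightarrow> bool" where
  "orthonormal f K \<longleftrightarrow> (\<forall>a\<in>K. \<forall>b\<in>K. cinner (f a) (f b) = (if a = b then 1 else 0))"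

text \<open>An orthonormal family spanning everything would give
  \<open>CARD('n) = \<Sum>\<^sub>j \<Sum>\<^sub>a |f\<^sub>a j|\<^sup>2 = card K\<close>.\<close>
lemma orthonormal_exists_orthogonal:
  fixes f :: "'k \<Rightarrow> complex^'n"
  assumes f: "orthonormal f K" and K: "finite K" "card K < CARD('n)"
  shows "\<exists>x. x \<noteq> 0 \<and> (\<forall>a\<in>K. cinner (f a) x = 0)"
proof (rule ccontr)
  assume "\<not> ?thesis"
  then have complete: "\<And>x. (\<forall>a\<in>K. cinner (f a) x = 0) \<Longrightarrow> x = 0"
    by blast
  have expand: "x = (\<Sum>a\<in>K. cinner (f a) x *s f a)" for x
  proof -
    have "cinner (f b) (x - (\<Sum>a\<in>K. cinner (f a) x *s f a)) = 0" if "b \<in> K" for b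
    proof -
      have "(\<Sum>a\<in>K. cinner (f a) x * cinner (f b) (f a)) = (\<Sum>a\<in>K. if a = b then cinner (f a) x else 0)"
        using f that by (intro sum.cong) (auto simp: orthonormal_def)
      then show ?thesis
        using that K by (simp add: cinner_diff_right cinner_sum_right cinner_scale_right)
    qed
    then have "x - (\<Sum>a\<in>K. cinner (f a) x *s f a) = 0"
      using complete by blast
    then show ?thesis
      by simp
  qed
  have "(\<Sum>a\<in>K. cnj (f a $ j) * f a $ j) = 1" for j
    using arg_cong[OF expand[of "axis j 1"], of "\<lambda>x. x $ j"] by (simp add: cinner_axis_right)
  then have "of_nat CARD('n) = (\<Sum>j\<in>UNIV. \<Sum>a\<in>K. cnj (f a $ j) * f a $ j)"
    by simp
  also have "\<dots> = (\<Sum>a\<in>K. cinner (f a) (f a))"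
    by (subst sum.swap) (simp add: cinner_def)
  also have "\<dots> = of_nat (card K)"
    using f by (simp add: orthonormal_def)
  finally have "CARD('n) = card K"
    by (simp only: of_nat_eq_iff)
  then show False
    using K by simp
qed

lemma hermitian_orthonormal_eigenvectors:
  fixes H :: "complex^'n^'n" and K :: "'n set"
  assumes H: "hermitian H"
  shows "\<exists>f l. orthonormal f K \<and> (\<forall>a\<in>K. H *v f a = complex_of_real (l a) *s f a)"
  using finite[of K]
proof (induction K rule: finite_induct)
  case empty
  then show ?case by (simp add: orthonormal_def)
next
  case (insert k K)
  obtain f l where f: "orthonormal f K" and eig: "\<forall>a\<in>K. H *v f a = complex_of_real (l a) *s f a"
    using insert.IH by blast
  have "card K < CARD('n)"
    using insert card_mono[of UNIV "insert k K"] by simp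
  then obtain x0 where x0: "x0 \<noteq> 0" "\<forall>a\<in>K. cinner (f a) x0 = 0"
    using orthonormal_exists_orthogonal[OF f insert.hyps(1)] by blast
  have "cinner u (H *v x) = 0" if u: "u \<in> f ` K" and ux: "cinner u x = 0" for u x
  proof -
    obtain a where a: "a \<in> K" "u = f a" using u by blast
    have "cinner u (H *v x) = cinner (H *v u) x"
      by (rule hermitian_cinner_adjoint[OF H])
    then show ?thesis
      using eig a ux by (simp add: cinner_scale_left)
  qed
  then obtain v \<mu> where v: "cinner v v = 1" "\<And>u. u \<in> f ` K \<Longrightarrow> cinner u v = 0"
    "H *v v = complex_of_real \<mu> *s v"
    using hermitian_eigenvector_orthogonal[OF H, of "f ` K" x0] x0 by blast
  have "cinner v (f b) = 0" if "b \<in> K" for b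
    using v(2)[of "f b"] that cinner_commute[of v "f b"] by simp
  then have "orthonormal (f(k := v)) (insert k K)"
    using f v insert.hyps(2) unfolding orthonormal_def by auto
  moreover have "\<forall>a\<in>insert k K. H *v (f(k := v)) a = complex_of_real ((l(k := \<mu>)) a) *s (f(k := v)) a"
    using eig v insert.hyps(2) by auto
  ultimately show ?case by blast
qed

definition spectral_matrix :: "('n \<Rightarrow> complex^'n) \<Rightarrow> ('n \<Rightarrow> real) \<Rightarrow> complex^'n^'n" where
  "spectral_matrix f l = (\<chi> r s. \<Sum>c\<in>UNIV. complex_of_real (l c) * f c $ r * cnj (f c $ s))"

lemma orthonormal_outer_sum:
  fixes f :: "'n \<Rightarrow> complex^'n"
  assumes "orthonormal f UNIV"
  shows "(\<Sum>c\<in>UNIV. f c $ r * cnj (f c $ s)) = (if r = s then 1 else 0)"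
proof -
  define U :: "complex^'n^'n" where "U = (\<chi> r c. f c $ r)"
  define V :: "complex^'n^'n" where "V = (\<chi> r c. cnj (f r $ c))"
  have "V ** U = mat 1"
    using assms by (simp add: vec_eq_iff matrix_matrix_mult_def U_def V_def mat_def orthonormal_def cinner_def)
  then have "U ** V = mat 1"
    using matrix_left_right_inverse by blast
  then show ?thesis
    by (simp add: vec_eq_iff matrix_matrix_mult_def U_def V_def mat_def)
qed

theorem hermitian_spectral_decomposition:
  fixes H :: "complex^'n^'n"
  assumes "hermitian H"
  obtains f l where "orthonormal f UNIV" "H = spectral_matrix f l"
proof -
  obtain f :: "'n \<Rightarrow> complex^'n" and l
    where f: "orthonormal f UNIV" and eig: "\<And>a. H *v f a = complex_of_real (l a) *s f a"
    using hermitian_orthonormal_eigenvectors[OF assms, of UNIV] by auto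
  have "H $ r $ s = spectral_matrix f l $ r $ s" for r s
  proof -
    have "H $ r $ s = (\<Sum>t\<in>UNIV. H $ r $ t * (\<Sum>c\<in>UNIV. f c $ t * cnj (f c $ s)))"
      by (simp add: orthonormal_outer_sum[OF f] if_distrib cong: if_cong)
    also have "\<dots> = (\<Sum>c\<in>UNIV. (\<Sum>t\<in>UNIV. H $ r $ t * f c $ t) * cnj (f c $ s))"
      by (simp add: sum_distrib_left sum_distrib_right mult_ac) (rule sum.swap)
    also have "\<dots> = spectral_matrix f l $ r $ s"
    proof -
      have "(\<Sum>t\<in>UNIV. H $ r $ t * f c $ t) = complex_of_real (l c) * f c $ r" for c
        using arg_cong[OF eig[of c], of "\<lambda>x. x $ r"] by (simp add: matrix_vector_mult_def)
      then show ?thesis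
        by (simp add: spectral_matrix_def)
    qed
    finally show ?thesis .
  qed
  then have "H = spectral_matrix f l"
    by (simp add: vec_eq_iff)
  with f show thesis
    by (rule that)
qed

lemma matrix_vector_mult_sum: "A *v (\<Sum>a\<in>K. v a) = (\<Sum>a\<in>K. A *v v a)"
  by (simp add: vec_eq_iff matrix_vector_mult_def sum_distrib_left sum_component; subst sum.swap; simp)

lemma spectral_matrix_mult_vec:
  "spectral_matrix f l *v x = (\<Sum>c\<in>UNIV. (complex_of_real (l c) * cinner (f c) x) *s f c)"
proof -
  have "(spectral_matrix f l *v x) $ r
      = (\<Sum>s\<in>UNIV. \<Sum>c\<in>UNIV. complex_of_real (l c) * f c $ r * cnj (f c $ s) * x $ s)" for r
    by (simp add: spectral_matrix_def matrix_vector_mult_def sum_distrib_right)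
  then show ?thesis
    by (simp add: vec_eq_iff sum_component cinner_def sum_distrib_left sum_distrib_right mult_ac)
      (subst sum.swap, simp)
qed

lemma spectral_matrix_eigenvector:
  assumes "orthonormal f UNIV"
  shows "spectral_matrix f l *v f a = complex_of_real (l a) *s f a"
proof -
  have "spectral_matrix f l *v f a = (\<Sum>c\<in>UNIV. if c = a then complex_of_real (l c) *s f c else 0)"
    unfolding spectral_matrix_mult_vec using assms by (intro sum.cong) (auto simp: orthonormal_def)
  then show ?thesis by simp
qed

lemma qform_spectral_matrix:
  "qform (spectral_matrix f l) x = complex_of_real (\<Sum>c\<in>UNIV. l c * (cmod (cinner (f c) x))^2)"
proof -
  have "cinner (f c) x * cinner x (f c) = complex_of_real ((cmod (cinner (f c) x))^2)" for c
    by (metis cinner_commute complex_norm_square)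
  then show ?thesis
    by (simp add: qform_def spectral_matrix_mult_vec cinner_sum_right cinner_scale_right
        of_real_sum mult.assoc)
qed

lemma psd_spectral_matrix_iff:
  assumes "orthonormal f UNIV"
  shows "psd (spectral_matrix f l) \<longleftrightarrow> (\<forall>c. l c \<ge> 0)"
proof
  assume psd: "psd (spectral_matrix f l)"
  show "\<forall>c. l c \<ge> 0"
  proof
    fix c
    have "qform (spectral_matrix f l) (f c) = complex_of_real (l c)"
      using assms by (simp add: qform_def spectral_matrix_eigenvector cinner_scale_right orthonormal_def)
    then show "l c \<ge> 0"
      using psd by (metis psd_iff_qform Re_complex_of_real)
  qed
next
  assume "\<forall>c. l c \<ge> 0"
  then show "psd (spectral_matrix f l)"
    unfolding psd_iff_qform qform_spectral_matrix by (simp add: sum_nonneg)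
qed

lemma spectral_matrix_mult:
  assumes "orthonormal f UNIV"
  shows "spectral_matrix f g ** spectral_matrix f h = spectral_matrix f (\<lambda>c. g c * h c)"
proof -
  have "(spectral_matrix f g ** spectral_matrix f h) *v x = spectral_matrix f (\<lambda>c. g c * h c) *v x" for x
    unfolding matrix_vector_mul_assoc[symmetric] spectral_matrix_mult_vec[of f h]
    by (simp add: matrix_vector_mult_sum matrix_vector_mult_scale spectral_matrix_eigenvector[OF assms]
        spectral_matrix_mult_vec[of f "\<lambda>c. g c * h c"] mult_ac)
  then show ?thesis
    by (simp add: matrix_eq)
qed

lemma sum_rotate3:
  "(\<Sum>i\<in>A. \<Sum>j\<in>B. \<Sum>k\<in>C. f i j k) = (\<Sum>k\<in>C. \<Sum>i\<in>A. \<Sum>j\<in>B. f i j k)"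
proof -
  have "(\<Sum>i\<in>A. \<Sum>j\<in>B. \<Sum>k\<in>C. f i j k) = (\<Sum>i\<in>A. \<Sum>k\<in>C. \<Sum>j\<in>B. f i j k)"
    by (intro sum.cong refl sum.swap)
  also have "\<dots> = (\<Sum>k\<in>C. \<Sum>i\<in>A. \<Sum>j\<in>B. f i j k)"
    by (rule sum.swap)
  finally show ?thesis .
qed

lemma trace_mult_spectral_matrix:
  "trace (A ** spectral_matrix f l) = (\<Sum>c\<in>UNIV. complex_of_real (l c) * qform A (f c))"
proof -
  have "trace (A ** spectral_matrix f l) = (\<Sum>r\<in>UNIV. \<Sum>t\<in>UNIV. \<Sum>c\<in>UNIV.
      complex_of_real (l c) * (cnj (f c $ r) * (A $ r $ t * f c $ t)))"
    by (simp add: trace_def matrix_matrix_mult_def spectral_matrix_def sum_distrib_left mult_ac)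
  also have "\<dots> = (\<Sum>c\<in>UNIV. \<Sum>r\<in>UNIV. \<Sum>t\<in>UNIV.
      complex_of_real (l c) * (cnj (f c $ r) * (A $ r $ t * f c $ t)))"
    by (rule sum_rotate3)
  also have "\<dots> = (\<Sum>c\<in>UNIV. complex_of_real (l c) * qform A (f c))"
    by (simp add: qform_def cinner_def matrix_vector_mult_def sum_distrib_left)
  finally show ?thesis .
qed

lemma psd_trace_mult_nonneg:
  assumes A: "psd A" and B: "psd B"
  shows "Re (trace (A ** B)) \<ge> 0"
proof -
  obtain f l where f: "orthonormal f UNIV" and B_eq: "B = spectral_matrix f l"
    using hermitian_spectral_decomposition[OF psd_imp_hermitian[OF B]] .
  have "l c \<ge> 0" for c
    using B f by (simp add: B_eq psd_spectral_matrix_iff)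
  then show ?thesis
    using A by (simp add: B_eq trace_mult_spectral_matrix Re_sum psd_iff_qform sum_nonneg)
qed

section \<open>Matrix square roots\<close>

lemma psd_sqrt_exists:
  assumes "psd M"
  obtains S where "psd S" "S ** S = M"
proof -
  obtain f l where f: "orthonormal f UNIV" and M: "M = spectral_matrix f l"
    using hermitian_spectral_decomposition[OF psd_imp_hermitian[OF assms]] .
  have l: "l c \<ge> 0" for c
    using assms f by (simp add: M psd_spectral_matrix_iff)
  let ?S = "spectral_matrix f (\<lambda>c. sqrt (l c))"
  have "psd ?S"
    using f l by (simp add: psd_spectral_matrix_iff)
  moreover have "?S ** ?S = M"
    using l by (simp add: M spectral_matrix_mult[OF f])
  ultimately show thesis
    by (rule that)
qed

text \<open>\<open>Q\<^sup>2 - P\<^sup>2 = Q (Q - P) + (Q - P) P\<close>, and an eigenvector of \<open>Q - P\<close> turns both terms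
  into multiples of quadratic forms.\<close>
lemma qform_diff_squares_eigenvector:
  fixes P Q :: "complex^'n^'n"
  assumes "hermitian (Q - P)" and eig: "(Q - P) *v v = complex_of_real \<mu> *s v"
  shows "qform (Q ** Q - P ** P) v = complex_of_real \<mu> * (qform Q v + qform P v)"
proof -
  have "qform (Q ** Q - P ** P) v = cinner v (Q *v ((Q - P) *v v)) + cinner v ((Q - P) *v (P *v v))"
    by (simp add: qform_def matrix_vector_mul_assoc[symmetric] matrix_vector_mult_diff_rdistrib
        matrix_vector_mult_diff_distrib cinner_diff_right)
  also have "cinner v ((Q - P) *v (P *v v)) = cinner ((Q - P) *v v) (P *v v)"
    by (rule hermitian_cinner_adjoint[OF assms(1)])
  finally show ?thesis
    using eig by (simp add: qform_def cinner_scale_left cinner_scale_right matrix_vector_mult_scale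
        distrib_left)
qed

lemma psd_square_mono:
  assumes P: "psd P" and Q: "psd Q" and squares: "psd (Q ** Q - P ** P)"
  shows "psd (Q - P)"
proof (rule ccontr)
  assume not_psd: "\<not> psd (Q - P)"
  have H: "hermitian (Q - P)"
    using P Q by (simp add: hermitian_diff psd_imp_hermitian)
  obtain f l where f: "orthonormal f UNIV" and QP: "Q - P = spectral_matrix f l"
    using hermitian_spectral_decomposition[OF H] .
  obtain a where neg: "l a < 0"
    using not_psd f by (auto simp: QP psd_spectral_matrix_iff not_le)
  have eig: "(Q - P) *v f a = complex_of_real (l a) *s f a"
    using f by (simp add: QP spectral_matrix_eigenvector)
  have unit: "cinner (f a) (f a) = 1"
    using f by (simp add: orthonormal_def)
  have "Re (qform (Q ** Q - P ** P) (f a)) = l a * (Re (qform Q (f a)) + Re (qform P (f a)))"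
    using qform_diff_squares_eigenvector[OF H eig] P Q by (simp add: psd_iff_qform)
  then have "Re (qform Q (f a)) + Re (qform P (f a)) \<le> 0"
    using squares neg by (metis psd_iff_qform mult_less_0_iff not_le)
  moreover have "Re (qform Q (f a)) \<ge> 0" "Re (qform P (f a)) \<ge> 0"
    using P Q psd_iff_qform by blast+
  ultimately have "Re (qform Q (f a)) = 0" "Re (qform P (f a)) = 0"
    by linarith+
  moreover have "Re (qform (Q - P) (f a)) = l a"
    using eig unit by (simp add: qform_def cinner_scale_right)
  ultimately show False
    using neg by (simp add: qform_diff)
qed

lemma psd_antisym:
  assumes "psd M" "psd (- M)"
  shows "M = 0"
proof -
  obtain f l where f: "orthonormal f UNIV" and M: "M = spectral_matrix f l"
    using hermitian_spectral_decomposition[OF psd_imp_hermitian[OF assms(1)]] .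
  have "- M = spectral_matrix f (\<lambda>c. - l c)"
    by (simp add: M spectral_matrix_def vec_eq_iff sum_negf)
  then have "l c \<ge> 0" "- l c \<ge> 0" for c
    using assms f by (simp_all add: M psd_spectral_matrix_iff)
  then have "l c = 0" for c
    by (meson order_antisym neg_0_le_iff_le)
  then show ?thesis
    by (simp add: M spectral_matrix_def vec_eq_iff)
qed

lemma psd_sqrt_unique:
  assumes "psd S" "psd T" "S ** S = T ** T"
  shows "S = T"
proof -
  have "psd (0 :: complex^'n^'n)"
    by (simp add: psd_iff_qform qform_def cinner_def)
  then have "psd (S ** S - T ** T)" "psd (T ** T - S ** S)"
    using assms(3) by simp_all
  then have "psd (S - T)" "psd (- (S - T))"
    using assms(1,2) psd_square_mono by simp_all
  then show ?thesis
    using psd_antisym by fastforce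
qed

lemma msqrt:
  assumes "psd M"
  shows msqrt_psd: "psd (msqrt M)" and msqrt_square: "msqrt M ** msqrt M = M"
proof -
  have "\<exists>!S. psd S \<and> S ** S = M"
    using psd_sqrt_exists[OF assms] psd_sqrt_unique by metis
  then have "psd (msqrt M) \<and> msqrt M ** msqrt M = M"
    unfolding msqrt_def by (rule theI')
  then show "psd (msqrt M)" "msqrt M ** msqrt M = M"
    by auto
qed

lemma msqrt_unique: "psd S \<Longrightarrow> msqrt (S ** S) = S"
  unfolding msqrt_def using psd_sqrt_unique by blast

lemma msqrt_scaleR:
  assumes "psd A" "r \<ge> 0"
  shows "msqrt (r *\<^sub>R A) = sqrt r *\<^sub>R msqrt A"
proof -
  have "(sqrt r *\<^sub>R msqrt A) ** (sqrt r *\<^sub>R msqrt A) = (sqrt r * sqrt r) *\<^sub>R (msqrt A ** msqrt A)"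
    by (simp add: matrix_scalar_ac flip: scalar_matrix_assoc)
  then have "(sqrt r *\<^sub>R msqrt A) ** (sqrt r *\<^sub>R msqrt A) = r *\<^sub>R A"
    using assms by (simp add: msqrt_square)
  moreover have "psd (sqrt r *\<^sub>R msqrt A)"
    using assms by (simp add: psd_scaleR msqrt_psd)
  ultimately show ?thesis
    using msqrt_unique by metis
qed

lemma msqrt_mono:
  assumes "psd A" "psd B" "psd (B - A)"
  shows "psd (msqrt B - msqrt A)"
  using assms psd_square_mono[of "msqrt A" "msqrt B"] by (simp add: msqrt_psd msqrt_square)

section \<open>The Hellinger distance\<close>

lemma matrix_diff_ldistrib: "(A::complex^'n^'n) ** (B - C) = A ** B - A ** C"
  by (simp add: vec_eq_iff matrix_matrix_mult_def sum_subtractf ring_distribs)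

lemma matrix_diff_rdistrib: "((A::complex^'n^'n) - B) ** C = A ** C - B ** C"
  by (simp add: vec_eq_iff matrix_matrix_mult_def sum_subtractf ring_distribs)

lemma trace_scaleR: "trace (r *\<^sub>R (A::complex^'n^'n)) = complex_of_real r * trace A"
  by (simp add: trace_def scaleR_matrix_component sum_distrib_left del: vector_scaleR_component)

lemma hellinger_sq_commute: "hellinger_sq R S = hellinger_sq S R"
  by (simp add: hellinger_sq_def matrix_diff_ldistrib matrix_diff_rdistrib trace_sub
      trace_mul_sym[of "msqrt R" "msqrt S"])

lemma hellinger_sq_eq_trace:
  assumes "psd R" "psd S"
  shows "hellinger_sq R S = Re (trace R) + Re (trace S) - 2 * Re (trace (msqrt R ** msqrt S))"
  using assms
  by (simp add: hellinger_sq_def matrix_diff_ldistrib matrix_diff_rdistrib trace_sub trace_add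
      msqrt_square trace_mul_sym[of "msqrt S" "msqrt R"])

lemma hellinger_sq_le_2:
  assumes "density_op R" "density_op S"
  shows "hellinger_sq R S \<le> 2"
  using assms psd_trace_mult_nonneg[OF msqrt_psd msqrt_psd, of R S]
  by (simp add: density_op_def hellinger_sq_eq_trace)

text \<open>If \<open>S \<ge> c\<^sup>2 R\<close> then \<open>\<surd>S \<ge> c \<surd>R\<close> by operator monotonicity, hence
  \<open>tr (\<surd>S \<surd>R) \<ge> c tr R = c\<close>.\<close>
lemma hellinger_sq_le_of_psd_diff:
  assumes R: "density_op R" and S: "density_op S" and c: "0 \<le> c" and RS: "psd (S - c^2 *\<^sub>R R)"
  shows "hellinger_sq R S \<le> 2 - 2 * c"
proof -
  have psd: "psd R" "psd S" and tr: "trace R = 1" "trace S = 1"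
    using R S by (auto simp: density_op_def)
  have "psd (msqrt S - msqrt (c^2 *\<^sub>R R))"
    using msqrt_mono[OF psd_scaleR[OF psd(1)] psd(2) RS] by simp
  then have "psd (msqrt S - c *\<^sub>R msqrt R)"
    using psd c by (simp add: msqrt_scaleR)
  then have "Re (trace ((msqrt S - c *\<^sub>R msqrt R) ** msqrt R)) \<ge> 0"
    using psd_trace_mult_nonneg msqrt_psd psd by blast
  moreover have "(msqrt S - c *\<^sub>R msqrt R) ** msqrt R = msqrt S ** msqrt R - c *\<^sub>R R"
    using psd by (simp add: matrix_diff_rdistrib msqrt_square flip: scalar_matrix_assoc)
  ultimately have "Re (trace (msqrt S ** msqrt R)) \<ge> c"
    using tr by (simp add: trace_sub trace_scaleR)
  then show ?thesis
    using psd tr by (simp add: hellinger_sq_eq_trace trace_mul_sym[of "msqrt R"])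
qed

definition vec_of_matrix :: "complex^'n^'n \<Rightarrow> complex^('n \<times> 'n)" where
  "vec_of_matrix A = (\<chi> p. A $ fst p $ snd p)"

lemma sum_UNIV_prod:
  "(\<Sum>p\<in>(UNIV::('a::finite \<times> 'b::finite) set). g p) = (\<Sum>a\<in>UNIV. \<Sum>b\<in>UNIV. g (a, b))"
  by (simp add: sum.cartesian_product flip: UNIV_Times_UNIV)

lemma trace_hermitian_square:
  assumes "hermitian A"
  shows "Re (trace (A ** A)) = (norm (vec_of_matrix A))^2"
proof -
  have "A $ r $ t * A $ t $ r = complex_of_real ((cmod (A $ r $ t))^2)" for r t
    using assms unfolding hermitian_def by (metis complex_norm_square)
  then have "Re (trace (A ** A)) = (\<Sum>r\<in>UNIV. \<Sum>t\<in>UNIV. (cmod (A $ r $ t))^2)"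
    by (simp add: trace_def matrix_matrix_mult_def Re_sum)
  also have "\<dots> = (norm (vec_of_matrix A))^2"
    by (simp add: norm_vec_def L2_set_def sum_nonneg vec_of_matrix_def sum_UNIV_prod)
  finally show ?thesis .
qed

lemma hellinger_sq_eq_norm:
  assumes "psd R" "psd S"
  shows "hellinger_sq R S = (norm (vec_of_matrix (msqrt R) - vec_of_matrix (msqrt S)))^2"
proof -
  have "hermitian (msqrt R - msqrt S)"
    using assms by (simp add: hermitian_diff psd_imp_hermitian msqrt_psd)
  moreover have "vec_of_matrix (msqrt R - msqrt S) = vec_of_matrix (msqrt R) - vec_of_matrix (msqrt S)"
    by (simp add: vec_of_matrix_def vec_eq_iff)
  ultimately show ?thesis
    by (simp add: hellinger_sq_def trace_hermitian_square)
qed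

lemma hellinger_sq_nonneg: "psd R \<Longrightarrow> psd S \<Longrightarrow> hellinger_sq R S \<ge> 0"
  by (simp add: hellinger_sq_eq_norm)

lemma hellinger_triangle:
  assumes "psd R" "psd S" "psd T"
  shows "sqrt (hellinger_sq R T) \<le> sqrt (hellinger_sq R S) + sqrt (hellinger_sq S T)"
  using assms dist_triangle[of "vec_of_matrix (msqrt R)" "vec_of_matrix (msqrt T)" "vec_of_matrix (msqrt S)"]
  by (simp add: hellinger_sq_eq_norm dist_norm dist_commute)

section \<open>Partial traces and tensor products\<close>

lemma trace_ptrA: "trace (ptrA M) = trace M"
  by (simp add: trace_def ptrA_def sum_UNIV_prod)

lemma trace_ptrB: "trace (ptrB M) = trace M"
  by (simp add: trace_def ptrB_def sum_UNIV_prod) (rule sum.swap)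

lemma qform_ptrA:
  "qform (ptrA M) x = (\<Sum>j\<in>UNIV. qform M (\<chi> p. if snd p = j then x $ fst p else 0))"
  by (simp add: qform_def cinner_def matrix_vector_mult_def ptrA_def sum_UNIV_prod
      sum_distrib_left sum_distrib_right if_distrib if_distribR mult_ac cong: if_cong)
    (rule sum_rotate3)

lemma sum_UNIV_prod_swap:
  "(\<Sum>p\<in>(UNIV::('a::finite \<times> 'b::finite) set). g p) = (\<Sum>b\<in>UNIV. \<Sum>a\<in>UNIV. g (a, b))"
  by (subst sum_UNIV_prod) (rule sum.swap)

lemma qform_ptrB:
  "qform (ptrB M) x = (\<Sum>i\<in>UNIV. qform M (\<chi> p. if fst p = i then x $ snd p else 0))"
  by (simp add: qform_def cinner_def matrix_vector_mult_def ptrB_def sum_UNIV_prod_swap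
      sum_distrib_left sum_distrib_right if_distrib if_distribR mult_ac cong: if_cong)
    (rule sum_rotate3)

lemma psd_ptrA: "psd M \<Longrightarrow> psd (ptrA M)"
  unfolding psd_iff_qform qform_ptrA by (simp add: Im_sum Re_sum sum_nonneg)

lemma psd_ptrB: "psd M \<Longrightarrow> psd (ptrB M)"
  unfolding psd_iff_qform qform_ptrB by (simp add: Im_sum Re_sum sum_nonneg)

lemma tensor_mult: "tensor A B ** tensor C D = tensor (A ** C) (B ** D)"
  by (simp add: vec_eq_iff matrix_matrix_mult_def tensor_def sum_UNIV_prod sum_product mult_ac)

lemma hermitian_tensor:
  assumes "hermitian A" "hermitian B"
  shows "hermitian (tensor A B)"
proof -
  have "A $ fst p $ fst q * B $ snd p $ snd q = cnj (A $ fst q $ fst p * B $ snd q $ snd p)" for p q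
    using assms unfolding hermitian_def by (metis complex_cnj_mult)
  then show ?thesis
    unfolding hermitian_def tensor_def by simp
qed

lemma psd_tensor:
  assumes "psd A" "psd B"
  shows "psd (tensor A B)"
proof -
  have "tensor A B = tensor (msqrt A) (msqrt B) ** tensor (msqrt A) (msqrt B)"
    using assms by (simp add: tensor_mult msqrt_square)
  then show ?thesis
    using assms by (simp add: hermitian_square_psd hermitian_tensor psd_imp_hermitian msqrt_psd)
qed

lemma trace_tensor: "trace (tensor A B) = trace A * trace B"
  by (simp add: trace_def tensor_def sum_UNIV_prod sum_product)

lemma density_op_tensor_ptr:
  assumes "density_op M"
  shows "density_op (tensor (ptrA M) (ptrB M))"
  using assms by (simp add: density_op_def psd_tensor psd_ptrA psd_ptrB trace_tensor trace_ptrA trace_ptrB)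

section \<open>Depolarizing noise\<close>

lemma ptrA_scaleR_add_id:
  "ptrA (a *\<^sub>R M + b *\<^sub>R mat 1 :: complex^('a::finite \<times> 'b::finite)^('a \<times> 'b))
    = a *\<^sub>R ptrA M + (b * real CARD('b)) *\<^sub>R mat 1"
  by (simp add: ptrA_def vec_eq_iff scaleR_matrix_component sum.distrib sum_distrib_left mat_def
      del: vector_scaleR_component)

lemma ptrB_scaleR_add_id:
  "ptrB (a *\<^sub>R M + b *\<^sub>R mat 1 :: complex^('a::finite \<times> 'b::finite)^('a \<times> 'b))
    = a *\<^sub>R ptrB M + (b * real CARD('a)) *\<^sub>R mat 1"
  by (simp add: ptrB_def vec_eq_iff scaleR_matrix_component sum.distrib sum_distrib_left mat_def
      del: vector_scaleR_component)

lemma tensor_scaleR_add_id: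
  fixes X :: "complex^'a::finite^'a" and Y :: "complex^'b::finite^'b"
  shows "tensor (a *\<^sub>R X + b *\<^sub>R mat 1) (a *\<^sub>R Y + b *\<^sub>R mat 1)
    = a^2 *\<^sub>R tensor X Y + (a * b) *\<^sub>R tensor X (mat 1) + (a * b) *\<^sub>R tensor (mat 1) Y
      + b^2 *\<^sub>R tensor (mat 1) (mat 1)"
  by (simp add: vec_eq_iff tensor_def scaleR_matrix_component power2_eq_square algebra_simps
      del: vector_scaleR_component)

lemma depol_eq:
  "depol \<epsilon> M = (1 - \<epsilon>) *\<^sub>R M + (\<epsilon> / (real CARD('d))^2) *\<^sub>R (mat 1 :: complex^('d::finite \<times> 'd)^('d \<times> 'd))"
  by (simp add: depol_def vec_eq_iff scaleR_matrix_component del: vector_scaleR_component)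

lemma density_op_depol:
  assumes "density_op \<rho>" "0 \<le> \<epsilon>" "\<epsilon> \<le> 1"
  shows "density_op (depol \<epsilon> \<rho>)"
proof -
  have "psd (depol \<epsilon> \<rho>)"
    using assms by (simp add: depol_eq density_op_def psd_add psd_scaleR psd_mat_1)
  moreover have "trace (depol \<epsilon> \<rho>) = 1"
    using assms by (simp add: depol_eq density_op_def trace_add trace_scaleR trace_I power2_eq_square)
  ultimately show ?thesis
    by (simp add: density_op_def)
qed

lemma hellinger_sq_depol_le:
  assumes \<rho>: "density_op \<rho>" and \<epsilon>: "0 \<le> \<epsilon>" "\<epsilon> \<le> 1"
  shows "hellinger_sq \<rho> (depol \<epsilon> \<rho>) \<le> 2 * \<epsilon>"
proof -
  have "psd (depol \<epsilon> \<rho> - (sqrt (1 - \<epsilon>))^2 *\<^sub>R \<rho>)"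
    using \<epsilon> by (simp add: depol_eq psd_scaleR psd_mat_1)
  then have "hellinger_sq \<rho> (depol \<epsilon> \<rho>) \<le> 2 - 2 * sqrt (1 - \<epsilon>)"
    using \<epsilon> by (intro hellinger_sq_le_of_psd_diff \<rho> density_op_depol) simp_all
  moreover have "1 - \<epsilon> \<le> sqrt (1 - \<epsilon>)"
    using \<epsilon> by (intro real_le_rsqrt) (simp add: power2_eq_square mult_left_le)
  ultimately show ?thesis
    by linarith
qed

lemma hellinger_sq_tensor_ptr_depol_le:
  fixes \<rho> :: "complex^('d::finite \<times> 'd)^('d \<times> 'd)"
  assumes \<rho>: "density_op \<rho>" and \<epsilon>: "0 \<le> \<epsilon>" "\<epsilon> \<le> 1"
  shows "hellinger_sq (tensor (ptrA \<rho>) (ptrB \<rho>))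
           (tensor (ptrA (depol \<epsilon> \<rho>)) (ptrB (depol \<epsilon> \<rho>))) \<le> 2 * \<epsilon>"
proof -
  define b where "b = \<epsilon> / (real CARD('d))^2 * real CARD('d)"
  have "b \<ge> 0"
    using \<epsilon> by (simp add: b_def)
  have "ptrA (depol \<epsilon> \<rho>) = (1 - \<epsilon>) *\<^sub>R ptrA \<rho> + b *\<^sub>R mat 1"
    "ptrB (depol \<epsilon> \<rho>) = (1 - \<epsilon>) *\<^sub>R ptrB \<rho> + b *\<^sub>R mat 1"
    by (simp_all add: depol_eq ptrA_scaleR_add_id ptrB_scaleR_add_id b_def)
  then have "psd (tensor (ptrA (depol \<epsilon> \<rho>)) (ptrB (depol \<epsilon> \<rho>))
      - (1 - \<epsilon>)^2 *\<^sub>R tensor (ptrA \<rho>) (ptrB \<rho>))"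
    using \<rho> \<epsilon> \<open>b \<ge> 0\<close>
    by (simp add: tensor_scaleR_add_id density_op_def psd_add psd_scaleR psd_tensor psd_ptrA
        psd_ptrB psd_mat_1)
  then show ?thesis
    using \<epsilon> hellinger_sq_le_of_psd_diff[OF density_op_tensor_ptr[OF \<rho>]
        density_op_tensor_ptr[OF density_op_depol[OF \<rho> \<epsilon>]], of "1 - \<epsilon>"]
    by simp
qed

lemma sq_le_of_sqrt_le_add:
  fixes F X e :: real
  assumes "0 \<le> F" "0 \<le> X" "F \<le> 2" "X \<le> 2" "0 \<le> e"
    and le: "sqrt F \<le> 2 * sqrt (2 * e) + sqrt X"
  shows "F \<le> (4 + 4 * sqrt 2) * sqrt e + X"
proof (cases "F \<le> X")
  case True
  moreover have "0 \<le> (4 + 4 * sqrt 2) * sqrt e"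
    using assms by simp
  ultimately show ?thesis
    by linarith
next
  case False
  have "F - X = (sqrt F - sqrt X) * (sqrt F + sqrt X)"
    using assms by (simp add: algebra_simps)
  also have "\<dots> \<le> (2 * sqrt 2 * sqrt e) * (2 * sqrt 2)"
  proof (intro mult_mono)
    show "sqrt F - sqrt X \<le> 2 * sqrt 2 * sqrt e"
      using le by (simp add: real_sqrt_mult)
    show "sqrt F + sqrt X \<le> 2 * sqrt 2"
      using assms by (smt (verit) real_sqrt_le_mono)
  qed (use assms in simp_all)
  also have "\<dots> = 8 * sqrt e"
    by simp
  also have "\<dots> \<le> (4 + 4 * sqrt 2) * sqrt e"
    using assms by (intro mult_right_mono) simp_all
  finally show ?thesis
    by simp
qed

theorem lemma4p4:
  fixes \<rho> :: "complex^('d::finite \<times> 'd)^('d \<times> 'd)" and \<epsilon> :: real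
  assumes "density_op \<rho>" and "0 \<le> \<epsilon>" and "\<epsilon> \<le> 1"
  defines "\<sigma> \<equiv> depol \<epsilon> \<rho>"
  shows "hellinger_sq \<sigma> (tensor (ptrA \<sigma>) (ptrB \<sigma>))
           \<le> (4 + 4 * sqrt 2) * sqrt \<epsilon> + hellinger_sq \<rho> (tensor (ptrA \<rho>) (ptrB \<rho>))"
proof -
  let ?\<tau>\<rho> = "tensor (ptrA \<rho>) (ptrB \<rho>)" and ?\<tau>\<sigma> = "tensor (ptrA \<sigma>) (ptrB \<sigma>)"
  have density: "density_op \<rho>" "density_op \<sigma>" "density_op ?\<tau>\<rho>" "density_op ?\<tau>\<sigma>"
    using assms by (simp_all add: density_op_depol density_op_tensor_ptr)
  then have psd: "psd \<rho>" "psd \<sigma>" "psd ?\<tau>\<rho>" "psd ?\<tau>\<sigma>"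
    by (simp_all add: density_op_def)
  have "sqrt (hellinger_sq \<sigma> ?\<tau>\<sigma>)
      \<le> sqrt (hellinger_sq \<sigma> \<rho>) + sqrt (hellinger_sq \<rho> ?\<tau>\<rho>) + sqrt (hellinger_sq ?\<tau>\<rho> ?\<tau>\<sigma>)"
    using hellinger_triangle[of \<sigma> \<rho> ?\<tau>\<sigma>] hellinger_triangle[of \<rho> ?\<tau>\<rho> ?\<tau>\<sigma>] psd by linarith
  moreover have "sqrt (hellinger_sq \<sigma> \<rho>) \<le> sqrt (2 * \<epsilon>)"
    "sqrt (hellinger_sq ?\<tau>\<rho> ?\<tau>\<sigma>) \<le> sqrt (2 * \<epsilon>)"
    using assms hellinger_sq_depol_le hellinger_sq_tensor_ptr_depol_le
    by (simp_all add: hellinger_sq_commute)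
  ultimately have "sqrt (hellinger_sq \<sigma> ?\<tau>\<sigma>) \<le> 2 * sqrt (2 * \<epsilon>) + sqrt (hellinger_sq \<rho> ?\<tau>\<rho>)"
    by linarith
  then show ?thesis
    using density psd assms(2)
    by (intro sq_le_of_sqrt_le_add hellinger_sq_nonneg hellinger_sq_le_2)
qed

end
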